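(* Let $\Pi$ be a "linear model" on a finite set $\mathcal X$, in the following sense: $\Pi$ is a convex set of probability distributions on $\mathcal X$, and for every probability distribution $\mathsf p$ on $\mathcal X$ there is a unique minimizer $\pi^*(\mathsf p)$ of $\pi\mapsto D_{KL}(\mathsf p\|\pi)$ over $\Pi$, which satisfies the Pythagorean identity $D_{KL}(\mathsf p\|\pi)=D_{KL}(\mathsf p\|\pi^*(\mathsf p))+D_{KL}(\pi^*(\mathsf p)\|\pi)$ for all $\pi\in\Pi$. Let $\hat{\mathsf p}_1,\dots,\hat{\mathsf p}_p$ be probability distributions on $\mathcal X$ with $D_{KL}(\hat{\mathsf p}_k\|\pi^*(\hat{\mathsf p}_k))<\infty$ for each $k$, set $\pi_k=\pi^*(\hat{\mathsf p}_k)$, and let $\lambda\in\Delta$. Then $$\pi^*(\hat{\mathsf p}_\lambda)=\sum_{k=1}^p\lambda_k\pi_k .$$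
   Context: Fix an integer $p\ge 1$, $\Delta=\{\lambda\in\mathbb R^p:\lambda_k\ge 0,\ \sum_k\lambda_k=1\}$, and $\hat{\mathsf p}_\lambda=\sum_k\lambda_k\hat{\mathsf p}_k$. $D_{KL}(P\|Q)=\sum_xP(x)\log\frac{P(x)}{Q(x)}\in[0,\infty]$ with conventions $0\log\frac0q=0$, $a\log\frac a0=+\infty$ for $a>0$. *)

theory Defs
  imports "HOL-Analysis.Analysis"
begin

definition is_dist :: "('a::finite \<Rightarrow> real) \<Rightarrow> bool" where
  "is_dist P \<longleftrightarrow> (\<forall>x. P x \<ge> 0) \<and> (\<Sum>x\<in>UNIV. P x) = 1"

definition KL :: "('a::finite \<Rightarrow> real) \<Rightarrow> ('a \<Rightarrow> real) \<Rightarrow> ereal" where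
  "KL P Q = (\<Sum>x\<in>UNIV. (if P x = 0 then 0
                         else if Q x = 0 then \<infinity>
                         else ereal (P x * ln (P x / Q x))))"

definition convex_dist_set :: "('a \<Rightarrow> real) set \<Rightarrow> bool" where
  "convex_dist_set S \<longleftrightarrow>
     (\<forall>q\<in>S. \<forall>r\<in>S. \<forall>t::real. 0 \<le> t \<and> t \<le> 1 \<longrightarrow> (\<lambda>x. t * q x + (1 - t) * r x) \<in> S)"

definition is_KL_minimizer :: "('a::finite \<Rightarrow> real) set \<Rightarrow> ('a \<Rightarrow> real) \<Rightarrow> ('a \<Rightarrow> real) \<Rightarrow> bool" where
  "is_KL_minimizer M P \<pi> \<longleftrightarrow> \<pi> \<in> M \<and> (\<forall>\<pi>'\<in>M. KL P \<pi> \<le> KL P \<pi>')"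

definition pistar :: "('a::finite \<Rightarrow> real) set \<Rightarrow> ('a \<Rightarrow> real) \<Rightarrow> ('a \<Rightarrow> real)" where
  "pistar M P = (THE \<pi>. is_KL_minimizer M P \<pi>)"

definition linear_model :: "('a::finite \<Rightarrow> real) set \<Rightarrow> bool" where
  "linear_model M \<longleftrightarrow>
     (\<forall>\<pi>\<in>M. is_dist \<pi>) \<and> convex_dist_set M \<and>
     (\<forall>P. is_dist P \<longrightarrow> (\<exists>!\<pi>. is_KL_minimizer M P \<pi>)) \<and>
     (\<forall>P. is_dist P \<longrightarrow> (\<forall>\<pi>\<in>M. KL P \<pi> = KL P (pistar M P) + KL (pistar M P) \<pi>))"

end

theory Submission
  imports Defs
begin

text \<open>Let \<open>\<sigma> = \<Sum>\<^sub>k \<lambda>\<^sub>k \<pi>\<^sub>k\<close>, which lies in the model by convexity. For \<open>\<pi>\<close> in the model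
  with \<open>D(p\<^sub>\<lambda> \<parallel> \<pi>) < \<infinity>\<close> put \<open>f = ln \<sigma> - ln \<pi>\<close>, so that
  \<open>D(p\<^sub>\<lambda> \<parallel> \<pi>) = D(p\<^sub>\<lambda> \<parallel> \<sigma>) + E\<^bsub>p\<^sub>\<lambda>\<^esub> f\<close>. Subtracting the Pythagorean identities for
  \<open>\<pi>\<close> and \<open>\<sigma>\<close> gives \<open>E\<^bsub>p\<^sub>k\<^esub> f = E\<^bsub>\<pi>\<^sub>k\<^esub> f\<close>; averaging over \<open>k\<close> yields
  \<open>E\<^bsub>p\<^sub>\<lambda>\<^esub> f = E\<^bsub>\<sigma>\<^esub> f = D(\<sigma> \<parallel> \<pi>) \<ge> 0\<close>. Hence \<open>\<sigma>\<close> minimizes \<open>D(p\<^sub>\<lambda> \<parallel> \<cdot>)\<close> over the model.\<close>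

definition supp :: "('a \<Rightarrow> real) \<Rightarrow> 'a set" where
  "supp P = {x. P x \<noteq> 0}"

definition mixture :: "('i \<Rightarrow> real) \<Rightarrow> 'i set \<Rightarrow> ('i \<Rightarrow> 'a \<Rightarrow> real) \<Rightarrow> 'a \<Rightarrow> real" where
  "mixture w I q = (\<lambda>x. \<Sum>k\<in>I. w k * q k x)"

lemma is_dist_nonneg: "is_dist P \<Longrightarrow> 0 \<le> P x"
  by (simp add: is_dist_def)

lemma KL_eq_ereal_sum:
  assumes "supp P \<subseteq> supp Q"
  shows "KL P Q = ereal (\<Sum>x\<in>UNIV. P x * ln (P x / Q x))"
proof -
  have "KL P Q = (\<Sum>x\<in>UNIV. ereal (P x * ln (P x / Q x)))"
    unfolding KL_def using assms by (intro sum.cong) (auto simp: supp_def)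
  then show ?thesis by simp
qed

lemma KL_eq_infinity: "P x \<noteq> 0 \<Longrightarrow> Q x = 0 \<Longrightarrow> KL P Q = \<infinity>"
  unfolding KL_def sum_Pinfty by (intro conjI bexI[of _ x]) auto

lemma supp_subset_if_KL_finite: "KL P Q \<noteq> \<infinity> \<Longrightarrow> supp P \<subseteq> supp Q"
  using KL_eq_infinity by (fastforce simp: supp_def)

lemma KL_self: "KL P P = 0"
  unfolding KL_def by (intro sum.neutral) simp

lemma diff_le_mult_ln_div:
  fixes a b :: real
  assumes "0 < a" "0 < b"
  shows "a - b \<le> a * ln (a / b)"
proof -
  have "ln (b / a) \<le> b / a - 1"
    using assms by (intro ln_le_minus_one) auto
  then have "a * ln (b / a) \<le> b - a"
    using assms by (simp add: field_simps mult_left_mono)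
  then show ?thesis
    using assms by (simp add: ln_div algebra_simps)
qed

lemma KL_nonneg:
  assumes "is_dist P" "is_dist Q"
  shows "0 \<le> KL P Q"
proof (cases "supp P \<subseteq> supp Q")
  case True
  have "(\<Sum>x\<in>UNIV. P x - Q x) \<le> (\<Sum>x\<in>UNIV. P x * ln (P x / Q x))"
  proof (rule sum_mono)
    fix x
    show "P x - Q x \<le> P x * ln (P x / Q x)"
    proof (cases "P x = 0")
      case False
      with True assms have "0 < P x" "0 < Q x"
        by (auto simp: supp_def is_dist_def order_neq_le_trans)
      then show ?thesis by (rule diff_le_mult_ln_div)
    qed (use assms in \<open>simp add: is_dist_def\<close>)
  qed
  moreover have "(\<Sum>x\<in>UNIV. P x - Q x) = 0"
    using assms by (simp add: sum_subtractf is_dist_def)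
  ultimately show ?thesis
    using True by (simp add: KL_eq_ereal_sum)
next
  case False
  then have "KL P Q = \<infinity>"
    using supp_subset_if_KL_finite by blast
  then show ?thesis by simp
qed

lemma KL_change_reference:
  assumes "\<And>x. 0 \<le> P x" "\<And>x. 0 \<le> Q x" "\<And>x. 0 \<le> R x"
    and "supp P \<subseteq> supp Q" "supp P \<subseteq> supp R"
  shows "KL P R = KL P Q + ereal (\<Sum>x\<in>UNIV. P x * (ln (Q x) - ln (R x)))"
proof -
  have "P x * ln (P x / R x) = P x * ln (P x / Q x) + P x * (ln (Q x) - ln (R x))" for x
  proof (cases "P x = 0")
    case False
    with assms have "0 < P x" "0 < Q x" "0 < R x"
      by (auto simp: supp_def order_neq_le_trans)
    then show ?thesis by (simp add: ln_div algebra_simps)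
  qed simp
  then show ?thesis
    using assms by (simp add: KL_eq_ereal_sum sum.distrib)
qed

lemma is_dist_mixture:
  assumes "\<And>k. k \<in> I \<Longrightarrow> 0 \<le> w k" "sum w I = 1" "\<And>k. k \<in> I \<Longrightarrow> is_dist (q k)"
  shows "is_dist (mixture w I q)"
proof -
  have "(\<Sum>x\<in>UNIV. mixture w I q x) = (\<Sum>k\<in>I. w k * (\<Sum>x\<in>UNIV. q k x))"
    unfolding mixture_def by (subst sum.swap) (simp add: sum_distrib_left)
  also have "\<dots> = 1"
    using assms by (simp add: is_dist_def)
  finally show ?thesis
    using assms unfolding is_dist_def mixture_def by (auto intro!: sum_nonneg)
qed

lemma sum_mixture_mult:
  "(\<Sum>x\<in>A. mixture w I q x * g x) = (\<Sum>k\<in>I. w k * (\<Sum>x\<in>A. q k x * g x))"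
  unfolding mixture_def
  by (simp add: sum_distrib_left sum_distrib_right mult.assoc sum.swap[of _ A])

lemma supp_mixture:
  assumes "finite I" "\<And>k. k \<in> I \<Longrightarrow> 0 \<le> w k" "\<And>k x. k \<in> I \<Longrightarrow> 0 \<le> q k x"
  shows "supp (mixture w I q) = (\<Union>k\<in>{k\<in>I. w k \<noteq> 0}. supp (q k))"
  using assms by (auto simp: supp_def mixture_def sum_nonneg_eq_0_iff)

lemma mixture_in_convex_dist_set:
  fixes M :: "('a::finite \<Rightarrow> real) set"
  assumes "convex_dist_set M" "finite I"
    and "\<And>k. k \<in> I \<Longrightarrow> 0 \<le> w k" "sum w I = 1" "\<And>k. k \<in> I \<Longrightarrow> q k \<in> M"
  shows "mixture w I q \<in> M"
proof -
  \<comment> \<open>\<open>'a \<Rightarrow> real\<close> is not a \<open>real_vector\<close> instance; transport to \<open>real^'a\<close> to use \<open>convex_sum\<close>.\<close>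
  let ?vec = "\<lambda>f::'a \<Rightarrow> real. \<chi> x. f x"
  have "convex (?vec ` M)"
    unfolding convex_alt
  proof (intro ballI allI impI)
    fix u :: real and f g assume "f \<in> ?vec ` M" "g \<in> ?vec ` M" "0 \<le> u \<and> u \<le> 1"
    then obtain f' g' where "f' \<in> M" "g' \<in> M" "f = ?vec f'" "g = ?vec g'" "0 \<le> u" "u \<le> 1"
      by blast
    moreover have "(1 - u) *\<^sub>R ?vec f' + u *\<^sub>R ?vec g' = ?vec (\<lambda>x. u * g' x + (1 - u) * f' x)"
      by (simp add: vec_eq_iff)
    ultimately show "(1 - u) *\<^sub>R f + u *\<^sub>R g \<in> ?vec ` M"
      using assms(1) unfolding convex_dist_set_def by auto
  qed
  then have "(\<Sum>k\<in>I. w k *\<^sub>R ?vec (q k)) \<in> ?vec ` M"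
    using assms by (intro convex_sum) auto
  moreover have "(\<Sum>k\<in>I. w k *\<^sub>R ?vec (q k)) = ?vec (mixture w I q)"
    by (simp add: vec_eq_iff mixture_def)
  ultimately show ?thesis
    by (auto simp: image_iff)
qed

lemma linear_model_is_dist: "linear_model M \<Longrightarrow> \<pi> \<in> M \<Longrightarrow> is_dist \<pi>"
  by (simp add: linear_model_def)

lemma pistar_is_KL_minimizer:
  assumes "linear_model M" "is_dist P"
  shows "is_KL_minimizer M P (pistar M P)"
proof -
  have "\<exists>!\<pi>. is_KL_minimizer M P \<pi>"
    using assms by (simp add: linear_model_def)
  then show ?thesis
    unfolding pistar_def by (rule theI')
qed

lemma pistar_eqI:
  assumes "linear_model M" "is_dist P" "is_KL_minimizer M P \<sigma>"
  shows "pistar M P = \<sigma>"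
proof -
  have "\<exists>!\<pi>. is_KL_minimizer M P \<pi>"
    using assms by (simp add: linear_model_def)
  then show ?thesis
    unfolding pistar_def using assms(3) by (metis the1_equality)
qed

lemma pistar_in_model: "linear_model M \<Longrightarrow> is_dist P \<Longrightarrow> pistar M P \<in> M"
  using pistar_is_KL_minimizer is_KL_minimizer_def by blast

lemma KL_pythagoras:
  "linear_model M \<Longrightarrow> is_dist P \<Longrightarrow> \<pi> \<in> M \<Longrightarrow> KL P \<pi> = KL P (pistar M P) + KL (pistar M P) \<pi>"
  by (simp add: linear_model_def)

lemma supp_pistar:
  assumes "linear_model M" "is_dist P" "\<pi> \<in> M" "supp P \<subseteq> supp \<pi>"
  shows "supp P \<subseteq> supp (pistar M P)" and "supp (pistar M P) \<subseteq> supp \<pi>"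
proof -
  have "KL P (pistar M P) + KL (pistar M P) \<pi> \<noteq> \<infinity>"
    using KL_eq_ereal_sum[OF assms(4)] KL_pythagoras[OF assms(1-3)] by simp
  then show "supp P \<subseteq> supp (pistar M P)" "supp (pistar M P) \<subseteq> supp \<pi>"
    by (simp_all add: supp_subset_if_KL_finite)
qed

lemma log_ratio_expectation_pistar:
  assumes M: "linear_model M" and P: "is_dist P" and "\<pi> \<in> M" "\<sigma> \<in> M"
    and "supp P \<subseteq> supp \<pi>" "supp P \<subseteq> supp \<sigma>"
  shows "(\<Sum>x\<in>UNIV. P x * (ln (\<sigma> x) - ln (\<pi> x)))
       = (\<Sum>x\<in>UNIV. pistar M P x * (ln (\<sigma> x) - ln (\<pi> x)))"
    (is "?E P = ?E ?P'")
proof -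
  have dist: "is_dist \<pi>" "is_dist \<sigma>" "is_dist ?P'"
    using assms by (auto intro: linear_model_is_dist pistar_in_model)
  have supp: "supp P \<subseteq> supp ?P'" "supp ?P' \<subseteq> supp \<pi>" "supp ?P' \<subseteq> supp \<sigma>"
    using supp_pistar assms by blast+
  obtain a b c where abc: "KL P ?P' = ereal a" "KL ?P' \<sigma> = ereal b" "KL ?P' \<pi> = ereal c"
    using supp KL_eq_ereal_sum by blast
  have "KL P \<pi> = KL P \<sigma> + ereal (?E P)"
    using assms dist by (intro KL_change_reference) (auto simp: is_dist_nonneg)
  then have "a + c = a + b + ?E P"
    using KL_pythagoras[OF M P] assms(3,4) abc by simp
  moreover have "KL ?P' \<pi> = KL ?P' \<sigma> + ereal (?E ?P')"
    using supp dist by (intro KL_change_reference) (auto simp: is_dist_nonneg)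
  then have "c = b + ?E ?P'"
    using abc by simp
  ultimately show ?thesis
    by simp
qed

lemma pistar_mixture:
  assumes M: "linear_model M" and I: "finite I"
    and w: "\<And>k. k \<in> I \<Longrightarrow> 0 \<le> w k" "sum w I = 1"
    and q: "\<And>k. k \<in> I \<Longrightarrow> is_dist (q k)"
    and fin: "\<And>k. k \<in> I \<Longrightarrow> KL (q k) (pistar M (q k)) \<noteq> \<infinity>"
  shows "pistar M (mixture w I q) = mixture w I (\<lambda>k. pistar M (q k))"
proof -
  define r where "r k = pistar M (q k)" for k
  let ?P = "mixture w I q" and ?\<sigma> = "mixture w I r"
  have r: "r k \<in> M" "is_dist (r k)" if "k \<in> I" for k
    using M q that unfolding r_def by (auto intro: pistar_in_model linear_model_is_dist)
  have P: "is_dist ?P"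
    using w q by (rule is_dist_mixture)
  have "convex_dist_set M"
    using M by (simp add: linear_model_def)
  then have \<sigma>: "?\<sigma> \<in> M"
    using I w r by (intro mixture_in_convex_dist_set) auto
  have supp_P: "supp ?P = (\<Union>k\<in>{k\<in>I. w k \<noteq> 0}. supp (q k))"
    using I w q by (intro supp_mixture) (auto simp: is_dist_nonneg)
  have supp_\<sigma>: "supp ?\<sigma> = (\<Union>k\<in>{k\<in>I. w k \<noteq> 0}. supp (r k))"
    using I w r by (intro supp_mixture) (auto simp: is_dist_nonneg)
  have supp_q_r: "supp (q k) \<subseteq> supp (r k)" if "k \<in> I" for k
    using fin[OF that] unfolding r_def by (rule supp_subset_if_KL_finite)
  have supp_P_\<sigma>: "supp ?P \<subseteq> supp ?\<sigma>"
    unfolding supp_P supp_\<sigma> using supp_q_r by blast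
  have "KL ?P ?\<sigma> \<le> KL ?P \<pi>" if \<pi>: "\<pi> \<in> M" for \<pi>
  proof (cases "supp ?P \<subseteq> supp \<pi>")
    case True
    let ?E = "\<lambda>p. \<Sum>x\<in>UNIV. p x * (ln (?\<sigma> x) - ln (\<pi> x))"
    have supp_q: "supp (q k) \<subseteq> supp \<pi>" "supp (q k) \<subseteq> supp ?\<sigma>" if "k \<in> I" "w k \<noteq> 0" for k
      using that True supp_P_\<sigma> unfolding supp_P by blast+
    have "?E ?P = (\<Sum>k\<in>I. w k * ?E (q k))"
      by (rule sum_mixture_mult)
    also have "\<dots> = (\<Sum>k\<in>I. w k * ?E (r k))"
      using log_ratio_expectation_pistar[OF M q \<pi> \<sigma> supp_q] unfolding r_def
      by (intro sum.cong) auto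
    also have "\<dots> = ?E ?\<sigma>"
      by (rule sum_mixture_mult[symmetric])
    finally have E_eq: "?E ?P = ?E ?\<sigma>" .
    have "supp ?\<sigma> \<subseteq> supp \<pi>"
      unfolding supp_\<sigma> r_def using supp_pistar(2)[OF M q \<pi> supp_q(1)] by blast
    then have "KL ?\<sigma> \<pi> = ereal (?E ?\<sigma>)"
      using KL_change_reference[of ?\<sigma> ?\<sigma> \<pi>] \<sigma> \<pi> M
      by (simp add: KL_self is_dist_nonneg linear_model_is_dist)
    then have "0 \<le> ?E ?P"
      using KL_nonneg[of ?\<sigma> \<pi>] \<sigma> \<pi> M E_eq by (simp add: linear_model_is_dist)
    moreover have "KL ?P \<pi> = KL ?P ?\<sigma> + ereal (?E ?P)"
      using P \<sigma> \<pi> M True supp_P_\<sigma>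
      by (intro KL_change_reference) (auto simp: is_dist_nonneg linear_model_is_dist)
    ultimately show ?thesis
      by (simp add: add_increasing2)
  next
    case False
    then have "KL ?P \<pi> = \<infinity>"
      using supp_subset_if_KL_finite by blast
    then show ?thesis by simp
  qed
  then have "is_KL_minimizer M ?P ?\<sigma>"
    using \<sigma> by (simp add: is_KL_minimizer_def)
  with M P show ?thesis
    unfolding r_def[abs_def] by (rule pistar_eqI)
qed

theorem mainTheorem10:
  fixes M :: "('a::finite \<Rightarrow> real) set"
    and p :: nat
    and phat :: "nat \<Rightarrow> 'a \<Rightarrow> real"
    and lam :: "nat \<Rightarrow> real"
  assumes "p \<ge> 1"
    and "linear_model M"
    and "\<And>k. k \<in> {1..p} \<Longrightarrow> is_dist (phat k)"
    and "\<And>k. k \<in> {1..p} \<Longrightarrow> KL (phat k) (pistar M (phat k)) < \<infinity>"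
    and "\<And>k. k \<in> {1..p} \<Longrightarrow> lam k \<ge> 0"
    and "(\<Sum>k\<in>{1..p}. lam k) = 1"
  shows "pistar M (\<lambda>x. \<Sum>k\<in>{1..p}. lam k * phat k x)
         = (\<lambda>x. \<Sum>k\<in>{1..p}. lam k * pistar M (phat k) x)"
proof -
  have "pistar M (mixture lam {1..p} phat) = mixture lam {1..p} (\<lambda>k. pistar M (phat k))"
    using assms(2-6) by (intro pistar_mixture) auto
  then show ?thesis
    by (simp add: mixture_def)
qed

end
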